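(* Let $A\in\mathbb{R}^{m\times n}$, $b\in\mathbb{R}^m$ with $\{x:Ax=b\}\neq\emptyset$, and take $\delta=0$. Let $x^*$ be an optimal solution of $\min\{\|x\|_0: Ax=b\}$, let $I^*=\{i: x^*_i\neq0\}$ and $\bar I^*=\{1,\dots,n\}\setminus I^*$. Say that a vector $v\in\mathbb{R}^n_+$ satisfies the null space condition (NSC) if $$\langle v_{I^*},|y_{I^*}|\rangle<\langle v_{\bar I^*},|y_{\bar I^*}|\rangle\quad\text{for every } 0\neq y\in\operatorname{Null}(A).$$ Consider the iterates $x^k,v^k$ generated by the exact penalty decomposition method described in the context (with $\delta=0$). Assume $v^k$ satisfies (NSC) for some nonnegative integer $k$. Then $x^{k+1}=x^*$. If, in addition, $v^{k+1}$ also satisfies (NSC), then $v^{k+l}$ satisfies (NSC) for all $l\ge2$ and $x^{k+l+1}=x^*$ for all $l\ge1$. Consequently, if $v^0$ satisfies (NSC), then $x^k=x^*$ for all $k\ge1$.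
   Context: Exact penalty decomposition method: (S.0) Given a tolerance $\epsilon>0$ and a ratio $\sigma>1$, choose $\rho_0>0$, set $v^0=e$ (the all-ones vector in $\mathbb{R}^n$) and $k:=0$. (S.1) Choose $x^{k+1}\in\arg\min_{x\in\mathbb{R}^n}\{\langle v^k,|x|\rangle:\ \|Ax-b\|\le\delta\}$. (S.2) For each $i$, set $v^{k+1}_i=0$ if $|x^{k+1}_i|>1/\rho_k$ and $v^{k+1}_i=1$ otherwise. (S.3) If $\langle v^{k+1},|x^{k+1}|\rangle\le\epsilon$, stop; otherwise go to (S.4). (S.4) Set $\rho_{k+1}=\sigma\rho_k$, $k:=k+1$, and go to (S.1). Here $\|x\|_0$ is the number of nonzero entries of $x$, $|x|$ the componentwise absolute value, $x_I$ the subvector of $x$ indexed by $I$, and $\operatorname{Null}(A)$ the null space of $A$. Statements about iterates refer to the iterates generated by the method. *)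

theory Defs
  imports "HOL-Analysis.Analysis"
begin

definition vabs :: "real ^ 'n \<Rightarrow> real ^ 'n" where
  "vabs x = (\<chi> i. \<bar>x $ i\<bar>)"

definition l0norm :: "real ^ 'n \<Rightarrow> nat" where
  "l0norm x = card {i. x $ i \<noteq> 0}"

definition supp_idx :: "real ^ 'n \<Rightarrow> 'n set" where
  "supp_idx x = {i. x $ i \<noteq> 0}"

definition null_space :: "real ^ 'n ^ 'm \<Rightarrow> (real ^ 'n) set" where
  "null_space A = {y. A *v y = 0}"

definition l0_optimal :: "real ^ 'n ^ 'm \<Rightarrow> real ^ 'm \<Rightarrow> real ^ 'n \<Rightarrow> bool" where
  "l0_optimal A b x \<longleftrightarrow> A *v x = b \<and> (\<forall>z. A *v z = b \<longrightarrow> l0norm x \<le> l0norm z)"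

definition NSC :: "real ^ 'n ^ 'm \<Rightarrow> real ^ 'n \<Rightarrow> real ^ 'n \<Rightarrow> bool" where
  "NSC A xs v \<longleftrightarrow> (\<forall>i. 0 \<le> v $ i) \<and>
     (\<forall>y \<in> null_space A. y \<noteq> 0 \<longrightarrow>
        (\<Sum>i\<in>supp_idx xs. v $ i * \<bar>y $ i\<bar>) < (\<Sum>i\<in>- supp_idx xs. v $ i * \<bar>y $ i\<bar>))"

definition epd_subprob_min :: "real ^ 'n ^ 'm \<Rightarrow> real ^ 'm \<Rightarrow> real \<Rightarrow> real ^ 'n \<Rightarrow> real ^ 'n \<Rightarrow> bool" where
  "epd_subprob_min A b \<delta> w x \<longleftrightarrow> norm (A *v x - b) \<le> \<delta> \<and>
     (\<forall>z. norm (A *v z - b) \<le> \<delta> \<longrightarrow> w \<bullet> vabs x \<le> w \<bullet> vabs z)"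

definition epd_weights :: "real \<Rightarrow> real ^ 'n \<Rightarrow> real ^ 'n" where
  "epd_weights \<rho> x = (\<chi> i. if \<bar>x $ i\<bar> > 1 / \<rho> then 0 else 1)"

text \<open>The method has not stopped at any of the checks (S.3) performed at iterations 1..k,
  i.e. iteration k+1 (computing x^(k+1), v^(k+1)) is carried out.\<close>
definition epd_alive :: "real \<Rightarrow> (nat \<Rightarrow> real ^ 'n) \<Rightarrow> (nat \<Rightarrow> real ^ 'n) \<Rightarrow> nat \<Rightarrow> bool" where
  "epd_alive \<epsilon> x v k \<longleftrightarrow> (\<forall>j\<in>{1..k}. \<epsilon> < v j \<bullet> vabs (x j))"

definition epd_iterates ::
  "real ^ 'n ^ 'm \<Rightarrow> real ^ 'm \<Rightarrow> real \<Rightarrow> real \<Rightarrow> real \<Rightarrow>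
   (nat \<Rightarrow> real ^ 'n) \<Rightarrow> (nat \<Rightarrow> real ^ 'n) \<Rightarrow> (nat \<Rightarrow> real) \<Rightarrow> bool" where
  "epd_iterates A b \<delta> \<epsilon> \<sigma> x v \<rho> \<longleftrightarrow>
     0 < \<rho> 0 \<and> v 0 = (\<chi> i. 1) \<and>
     (\<forall>k. epd_alive \<epsilon> x v k \<longrightarrow>
        epd_subprob_min A b \<delta> (v k) (x (Suc k)) \<and>
        v (Suc k) = epd_weights (\<rho> k) (x (Suc k)) \<and>
        \<rho> (Suc k) = \<sigma> * \<rho> k)"

end

theory Submission
  imports Defs
begin

text \<open>If \<open>v\<close> satisfies NSC, \<open>x*\<close> is the unique minimizer of \<open>\<langle>v,|x|\<rangle>\<close> over \<open>Ax = b\<close>: for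
  \<open>d = x - x*\<close> in the null space, \<open>\<langle>v,|x|\<rangle> \<ge> \<langle>v,|x*|\<rangle> - \<langle>v\<^sub>I,|d\<^sub>I|\<rangle> + \<langle>v\<^sub>I\<^sub>c,|d\<^sub>I\<^sub>c|\<rangle>\<close>,
  and NSC makes the last two terms strictly positive together. Once \<open>x\<^sup>k\<^sup>+\<^sup>1 = x*\<close>,
  the new weights vanish on those indices of \<open>I*\<close> where \<open>|x*\<^sub>i| > 1/\<rho>\<^sub>k\<close> and are \<open>1\<close> off \<open>I*\<close>;
  as \<open>\<rho>\<^sub>k\<close> grows, the weights on \<open>I*\<close> only decrease, and decreasing weights on \<open>I*\<close>
  preserves NSC.\<close>

lemma inner_vabs_split:
  fixes w y :: "real ^ 'n"
  shows "w \<bullet> vabs y = (\<Sum>i\<in>S. w $ i * \<bar>y $ i\<bar>) + (\<Sum>i\<in>- S. w $ i * \<bar>y $ i\<bar>)"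
proof -
  have "w \<bullet> vabs y = (\<Sum>i\<in>UNIV. w $ i * \<bar>y $ i\<bar>)"
    by (simp add: inner_vec_def vabs_def)
  also have "\<dots> = (\<Sum>i\<in>S. w $ i * \<bar>y $ i\<bar>) + (\<Sum>i\<in>- S. w $ i * \<bar>y $ i\<bar>)"
    using sum.Int_Diff[of UNIV "\<lambda>i. w $ i * \<bar>y $ i\<bar>" S] by (simp add: Compl_eq_Diff_UNIV)
  finally show ?thesis .
qed

lemma epd_subprob_min_eq_if_NSC:
  assumes nsc: "NSC A xs w" and min: "epd_subprob_min A b 0 w y" and feas: "A *v xs = b"
  shows "y = xs"
proof (rule ccontr)
  assume "y \<noteq> xs"
  define d where "d = y - xs"
  let ?I = "supp_idx xs"
  have "A *v y = b" and y_le: "w \<bullet> vabs y \<le> w \<bullet> vabs xs"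
    using min feas unfolding epd_subprob_min_def by auto
  then have "d \<in> null_space A" "d \<noteq> 0"
    using feas \<open>y \<noteq> xs\<close> by (auto simp: d_def null_space_def matrix_vector_mult_diff_distrib)
  then have nsc_d: "(\<Sum>i\<in>?I. w $ i * \<bar>d $ i\<bar>) < (\<Sum>i\<in>- ?I. w $ i * \<bar>d $ i\<bar>)"
    using nsc unfolding NSC_def by auto
  have off_y: "(\<Sum>i\<in>- ?I. w $ i * \<bar>y $ i\<bar>) = (\<Sum>i\<in>- ?I. w $ i * \<bar>d $ i\<bar>)"
    by (rule sum.cong) (auto simp: supp_idx_def d_def)
  have off_xs: "(\<Sum>i\<in>- ?I. w $ i * \<bar>xs $ i\<bar>) = 0"
    by (rule sum.neutral) (auto simp: supp_idx_def)
  have "(\<Sum>i\<in>?I. w $ i * \<bar>xs $ i\<bar> - w $ i * \<bar>d $ i\<bar>) \<le> (\<Sum>i\<in>?I. w $ i * \<bar>y $ i\<bar>)"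
  proof (rule sum_mono)
    fix i
    have "\<bar>xs $ i\<bar> - \<bar>d $ i\<bar> \<le> \<bar>y $ i\<bar>" by (simp add: d_def)
    then have "w $ i * (\<bar>xs $ i\<bar> - \<bar>d $ i\<bar>) \<le> w $ i * \<bar>y $ i\<bar>"
      using nsc by (simp add: NSC_def mult_left_mono)
    then show "w $ i * \<bar>xs $ i\<bar> - w $ i * \<bar>d $ i\<bar> \<le> w $ i * \<bar>y $ i\<bar>"
      by (simp add: right_diff_distrib)
  qed
  then have on_y: "(\<Sum>i\<in>?I. w $ i * \<bar>xs $ i\<bar>) - (\<Sum>i\<in>?I. w $ i * \<bar>d $ i\<bar>)
      \<le> (\<Sum>i\<in>?I. w $ i * \<bar>y $ i\<bar>)"
    by (simp add: sum_subtractf)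
  have "w \<bullet> vabs xs < w \<bullet> vabs y"
    using inner_vabs_split[of w xs ?I] inner_vabs_split[of w y ?I] off_y off_xs on_y nsc_d
    by linarith
  with y_le show False by simp
qed

lemma NSC_decrease_on_support:
  assumes nsc: "NSC A xs w" and nonneg: "\<And>i. 0 \<le> u $ i"
    and on_supp: "\<And>i. i \<in> supp_idx xs \<Longrightarrow> u $ i \<le> w $ i"
    and off_supp: "\<And>i. i \<notin> supp_idx xs \<Longrightarrow> u $ i = w $ i"
  shows "NSC A xs u"
  unfolding NSC_def
proof (intro conjI ballI impI allI)
  fix i show "0 \<le> u $ i" by (rule nonneg)
next
  fix y assume "y \<in> null_space A" "y \<noteq> 0"
  have "(\<Sum>i\<in>supp_idx xs. u $ i * \<bar>y $ i\<bar>) \<le> (\<Sum>i\<in>supp_idx xs. w $ i * \<bar>y $ i\<bar>)"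
    by (rule sum_mono) (simp add: on_supp mult_right_mono)
  also have "\<dots> < (\<Sum>i\<in>- supp_idx xs. w $ i * \<bar>y $ i\<bar>)"
    using nsc \<open>y \<in> null_space A\<close> \<open>y \<noteq> 0\<close> unfolding NSC_def by auto
  also have "\<dots> = (\<Sum>i\<in>- supp_idx xs. u $ i * \<bar>y $ i\<bar>)"
    by (rule sum.cong) (auto simp: off_supp)
  finally show "(\<Sum>i\<in>supp_idx xs. u $ i * \<bar>y $ i\<bar>) < (\<Sum>i\<in>- supp_idx xs. u $ i * \<bar>y $ i\<bar>)" .
qed

lemma epd_weights_nonneg: "0 \<le> epd_weights r xs $ i"
  by (simp add: epd_weights_def)

lemma epd_weights_le_one: "epd_weights r xs $ i \<le> 1"
  by (simp add: epd_weights_def)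

lemma epd_weights_off_support: "0 < r \<Longrightarrow> i \<notin> supp_idx xs \<Longrightarrow> epd_weights r xs $ i = 1"
  by (simp add: epd_weights_def supp_idx_def)

lemma epd_weights_antimono:
  assumes "0 < r" "r \<le> r'"
  shows "epd_weights r' xs $ i \<le> epd_weights r xs $ i"
proof -
  have "1 / r' \<le> 1 / r" using assms by (simp add: frac_le)
  then show ?thesis by (auto simp: epd_weights_def)
qed

lemma NSC_epd_weights_mono:
  assumes "NSC A xs (epd_weights r xs)" "0 < r" "r \<le> r'"
  shows "NSC A xs (epd_weights r' xs)"
  using assms
  by (intro NSC_decrease_on_support[OF assms(1)] epd_weights_nonneg epd_weights_antimono)
     (simp_all add: epd_weights_off_support)

lemma NSC_epd_weights_if_NSC_ones:
  assumes "NSC A xs (\<chi> i. 1)" "0 < r"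
  shows "NSC A xs (epd_weights r xs)"
  using assms
  by (intro NSC_decrease_on_support[OF assms(1)] epd_weights_nonneg)
     (simp_all add: epd_weights_le_one epd_weights_off_support)

lemma epd_alive_mono: "epd_alive \<epsilon> x v k \<Longrightarrow> j \<le> k \<Longrightarrow> epd_alive \<epsilon> x v j"
  by (auto simp: epd_alive_def)

context
  fixes A :: "real ^ 'n ^ 'm" and b :: "real ^ 'm" and \<epsilon> \<sigma> :: real
    and x v :: "nat \<Rightarrow> real ^ 'n" and \<rho> :: "nat \<Rightarrow> real"
  assumes run: "epd_iterates A b 0 \<epsilon> \<sigma> x v \<rho>" and sigma: "1 < \<sigma>"
begin

lemma epd_rho_pos: "epd_alive \<epsilon> x v k \<Longrightarrow> 0 < \<rho> k"
proof (induction k)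
  case 0
  then show ?case using run by (simp add: epd_iterates_def)
next
  case (Suc k)
  have "epd_alive \<epsilon> x v k" using Suc.prems by (rule epd_alive_mono) simp
  with Suc.IH run sigma show ?case by (simp add: epd_iterates_def)
qed

lemma epd_rho_mono: "epd_alive \<epsilon> x v (k + l) \<Longrightarrow> \<rho> k \<le> \<rho> (k + l)"
proof (induction l)
  case 0
  then show ?case by simp
next
  case (Suc l)
  have alive: "epd_alive \<epsilon> x v (k + l)" using Suc.prems by (rule epd_alive_mono) simp
  then have "\<rho> (k + Suc l) = \<sigma> * \<rho> (k + l)" using run by (simp add: epd_iterates_def)
  moreover have "\<rho> (k + l) \<le> \<sigma> * \<rho> (k + l)"
    using epd_rho_pos[OF alive] sigma by simp
  ultimately show ?case using Suc.IH[OF alive] by simp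
qed

lemma epd_step_if_NSC:
  assumes feas: "A *v xs = b" and nsc: "NSC A xs (v k)" and alive: "epd_alive \<epsilon> x v k"
  shows "x (Suc k) = xs" and "v (Suc k) = epd_weights (\<rho> k) xs"
proof -
  have "epd_subprob_min A b 0 (v k) (x (Suc k))" "v (Suc k) = epd_weights (\<rho> k) (x (Suc k))"
    using run alive by (auto simp: epd_iterates_def)
  moreover from this(1) show "x (Suc k) = xs" by (rule epd_subprob_min_eq_if_NSC[OF nsc _ feas])
  ultimately show "v (Suc k) = epd_weights (\<rho> k) xs" by simp
qed

lemma epd_NSC_persists:
  assumes feas: "A *v xs = b" and nsc: "NSC A xs (v k)" and nsc_Suc: "NSC A xs (v (Suc k))"
  shows "epd_alive \<epsilon> x v (k + l) \<Longrightarrow> NSC A xs (v (Suc (k + l)))"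
proof (induction l)
  case 0
  then show ?case using nsc_Suc by simp
next
  case (Suc l)
  have "epd_alive \<epsilon> x v (k + l)" using Suc.prems by (rule epd_alive_mono) simp
  then have "NSC A xs (v (k + Suc l))" using Suc.IH by simp
  then have v_next: "v (Suc (k + Suc l)) = epd_weights (\<rho> (k + Suc l)) xs"
    using epd_step_if_NSC[OF feas] Suc.prems by blast
  have alive_k: "epd_alive \<epsilon> x v k" using Suc.prems by (rule epd_alive_mono) simp
  then have "NSC A xs (epd_weights (\<rho> k) xs)"
    using nsc_Suc epd_step_if_NSC(2)[OF feas nsc] by simp
  then show ?case
    unfolding v_next
    by (rule NSC_epd_weights_mono[OF _ epd_rho_pos[OF alive_k] epd_rho_mono[OF Suc.prems]])
qed

end

theorem theorem3p3:
  fixes A :: "real ^ 'n ^ 'm" and b :: "real ^ 'm" and xs :: "real ^ 'n"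
    and \<epsilon> \<sigma> :: real
    and x v :: "nat \<Rightarrow> real ^ 'n" and \<rho> :: "nat \<Rightarrow> real" and k :: nat
  assumes feas: "{z. A *v z = b} \<noteq> {}"
    and eps: "0 < \<epsilon>" and sigma: "1 < \<sigma>"
    and opt: "l0_optimal A b xs"
    and run: "epd_iterates A b 0 \<epsilon> \<sigma> x v \<rho>"
  shows "(NSC A xs (v k) \<longrightarrow> epd_alive \<epsilon> x v k \<longrightarrow> x (k + 1) = xs)
    \<and> (NSC A xs (v k) \<and> NSC A xs (v (k + 1)) \<longrightarrow>
         (\<forall>l\<ge>2. epd_alive \<epsilon> x v (k + l - 1) \<longrightarrow> NSC A xs (v (k + l))) \<and>
         (\<forall>l\<ge>1. epd_alive \<epsilon> x v (k + l) \<longrightarrow> x (k + l + 1) = xs))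
    \<and> (NSC A xs (v 0) \<longrightarrow> (\<forall>j\<ge>1. epd_alive \<epsilon> x v (j - 1) \<longrightarrow> x j = xs))"
proof -
  have Axs: "A *v xs = b" using opt by (simp add: l0_optimal_def)
  note step = epd_step_if_NSC[OF run sigma Axs]
  note persists = epd_NSC_persists[OF run sigma Axs]
  have NSC_later: "NSC A xs (v (k + l))"
    if "NSC A xs (v k)" "NSC A xs (v (Suc k))" "1 \<le> l" "epd_alive \<epsilon> x v (k + l - 1)" for k l
    using persists[OF that(1,2), of "l - 1"] that(3,4) by simp
  have NSC_v1: "NSC A xs (v 1)" if "NSC A xs (v 0)"
  proof -
    have "v 0 = (\<chi> i. 1)" "0 < \<rho> 0" using run by (simp_all add: epd_iterates_def)
    then show ?thesis
      using step(2)[of 0, OF that] that NSC_epd_weights_if_NSC_ones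
      by (simp add: epd_alive_def)
  qed
  show ?thesis
  proof (intro conjI impI allI)
    show "x (k + 1) = xs" if "NSC A xs (v k)" "epd_alive \<epsilon> x v k"
      using step(1) that by simp
    show "NSC A xs (v (k + l))"
      if "NSC A xs (v k) \<and> NSC A xs (v (k + 1))" "2 \<le> l" "epd_alive \<epsilon> x v (k + l - 1)" for l
      using NSC_later that by simp
    show "x (k + l + 1) = xs"
      if "NSC A xs (v k) \<and> NSC A xs (v (k + 1))" "1 \<le> l" "epd_alive \<epsilon> x v (k + l)" for l
      using NSC_later[of k l] step(1)[of "k + l"] epd_alive_mono[OF that(3), of "k + l - 1"] that
      by simp
    show "x j = xs" if "NSC A xs (v 0)" "1 \<le> j" "epd_alive \<epsilon> x v (j - 1)" for j
    proof -
      have "NSC A xs (v (j - 1))"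
        using NSC_later[of 0 "j - 1"] NSC_v1 that epd_alive_mono[OF that(3), of "j - Suc (Suc 0)"]
        by (cases "j = 1") simp_all
      then show ?thesis using step(1)[of "j - 1"] that by simp
    qed
  qed
qed

end
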